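(* Let $O$ be a split Cayley algebra over a field $F$ of characteristic $\neq2$, let $\mathfrak{H}$ be any collection of 4-dimensional associative subalgebras of $O$ and $\mathfrak{B}=\{\operatorname{im}(H):H\in\mathfrak{H}\}$. Then either some 2-dimensional subspace of $\operatorname{im}(O)$ of type M is contained in no element of $\mathfrak{B}$, or some 2-dimensional subspace of $\operatorname{im}(O)$ of type U is contained in more than one element of $\mathfrak{B}$. In particular no such $\mathfrak{B}$ is a $2$-$(7,3,1)$ subspace design on $\operatorname{im}(O)$.
   Context: Cayley algebra: $D_\gamma(D_\beta(D_\alpha(F)))$, $\alpha,\beta,\gamma\in F^\times$, with $D_\gamma(A)=A\oplus A$ (elements $a+ib$), $(a+ib)(c+id)=(ac+\gamma db^* )+i(a^*d+cb)$, $(a+ib)^*=a^*-ib$, starting from $F$ with identity involution; $\operatorname{im}(O)=\{a:a^*=-a\}$. Split: $O$ contains zero divisors. Nilpotent line: 1-dimensional subspace of nilpotent elements. A 2-dimensional $U\subseteq\operatorname{im}(O)$ is of type M if it contains exactly two nilpotent lines, and of type U if it contains exactly one nilpotent line $Fu$ and $uv\in Fu$ for all $v\in U$. A $2$-$(7,3,1)$ subspace design: 3-dimensional subspaces such that each 2-dimensional subspace lies in exactly one. *)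

theory Defs
  imports Complex_Main "HOL-Library.Product_Plus"
begin

text \<open>Iterated Cayley--Dickson doubling of a field F (type 'a) with the identity
  involution.  An element a + ib of D(A) is represented as the pair (a,b).
  Product rule: (a+ib)(c+id) = (ac + g d b^* ) + i(a^* d + c b),
  involution: (a+ib)^* = a^* - ib.  Additive structure is componentwise
  (Product_Plus).\<close>

type_synonym 'a cd1 = "'a \<times> 'a"
type_synonym 'a cd2 = "'a cd1 \<times> 'a cd1"
type_synonym 'a cd3 = "'a cd2 \<times> 'a cd2"

definition scale1 :: "'a::field \<Rightarrow> 'a cd1 \<Rightarrow> 'a cd1" where
  "scale1 k x = (k * fst x, k * snd x)"
definition conj1 :: "'a::field cd1 \<Rightarrow> 'a cd1" where
  "conj1 x = (fst x, - snd x)"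
definition mult1 :: "'a::field \<Rightarrow> 'a cd1 \<Rightarrow> 'a cd1 \<Rightarrow> 'a cd1" where
  "mult1 \<alpha> x y = (fst x * fst y + \<alpha> * (snd y * snd x), fst x * snd y + fst y * snd x)"

definition scale2 :: "'a::field \<Rightarrow> 'a cd2 \<Rightarrow> 'a cd2" where
  "scale2 k x = (scale1 k (fst x), scale1 k (snd x))"
definition conj2 :: "'a::field cd2 \<Rightarrow> 'a cd2" where
  "conj2 x = (conj1 (fst x), - snd x)"
definition mult2 :: "'a::field \<Rightarrow> 'a \<Rightarrow> 'a cd2 \<Rightarrow> 'a cd2 \<Rightarrow> 'a cd2" where
  "mult2 \<alpha> \<beta> x y =
     (mult1 \<alpha> (fst x) (fst y) + scale1 \<beta> (mult1 \<alpha> (snd y) (conj1 (snd x))),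
      mult1 \<alpha> (conj1 (fst x)) (snd y) + mult1 \<alpha> (fst y) (snd x))"

text \<open>Level 3: the Cayley algebra O = D_gamma(D_beta(D_alpha(F))).\<close>
definition scaleO :: "'a::field \<Rightarrow> 'a cd3 \<Rightarrow> 'a cd3" where
  "scaleO k x = (scale2 k (fst x), scale2 k (snd x))"
definition conjO :: "'a::field cd3 \<Rightarrow> 'a cd3" where
  "conjO x = (conj2 (fst x), - snd x)"
definition multO :: "'a::field \<Rightarrow> 'a \<Rightarrow> 'a \<Rightarrow> 'a cd3 \<Rightarrow> 'a cd3 \<Rightarrow> 'a cd3" where
  "multO \<alpha> \<beta> \<gamma> x y =
     (mult2 \<alpha> \<beta> (fst x) (fst y) + scale2 \<gamma> (mult2 \<alpha> \<beta> (snd y) (conj2 (snd x))),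
      mult2 \<alpha> \<beta> (conj2 (fst x)) (snd y) + mult2 \<alpha> \<beta> (fst y) (snd x))"
definition oneO :: "'a::field cd3" where
  "oneO = (((1, 0), (0, 0)), ((0, 0), (0, 0)))"

text \<open>Powers x^n (x^0 = 1, x^(n+1) = x * x^n; O is power-associative).\<close>
primrec powO :: "'a::field \<Rightarrow> 'a \<Rightarrow> 'a \<Rightarrow> 'a cd3 \<Rightarrow> nat \<Rightarrow> 'a cd3" where
  "powO \<alpha> \<beta> \<gamma> x 0 = oneO"
| "powO \<alpha> \<beta> \<gamma> x (Suc n) = multO \<alpha> \<beta> \<gamma> x (powO \<alpha> \<beta> \<gamma> x n)"

abbreviation subspO :: "'a::field cd3 set \<Rightarrow> bool" where
  "subspO U \<equiv> module.subspace scaleO U"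
abbreviation dimO :: "'a::field cd3 set \<Rightarrow> nat" where
  "dimO U \<equiv> vector_space.dim scaleO U"
abbreviation spanO :: "'a::field cd3 set \<Rightarrow> 'a cd3 set" where
  "spanO S \<equiv> module.span scaleO S"

definition split_cayley :: "'a::field \<Rightarrow> 'a \<Rightarrow> 'a \<Rightarrow> bool" where
  "split_cayley \<alpha> \<beta> \<gamma> \<longleftrightarrow>
     (\<exists>x y. x \<noteq> 0 \<and> y \<noteq> 0 \<and> multO \<alpha> \<beta> \<gamma> x y = 0)"

definition imO :: "'a::field cd3 set" where
  "imO = {a. conjO a = - a}"

definition nilpotentO :: "'a::field \<Rightarrow> 'a \<Rightarrow> 'a \<Rightarrow> 'a cd3 \<Rightarrow> bool" where
  "nilpotentO \<alpha> \<beta> \<gamma> x \<longleftrightarrow> (\<exists>n. powO \<alpha> \<beta> \<gamma> x n = 0)"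

definition nil_line :: "'a::field \<Rightarrow> 'a \<Rightarrow> 'a \<Rightarrow> 'a cd3 set \<Rightarrow> bool" where
  "nil_line \<alpha> \<beta> \<gamma> L \<longleftrightarrow> subspO L \<and> dimO L = 1 \<and> (\<forall>x\<in>L. nilpotentO \<alpha> \<beta> \<gamma> x)"

definition nil_lines_in :: "'a::field \<Rightarrow> 'a \<Rightarrow> 'a \<Rightarrow> 'a cd3 set \<Rightarrow> 'a cd3 set set" where
  "nil_lines_in \<alpha> \<beta> \<gamma> U = {L. nil_line \<alpha> \<beta> \<gamma> L \<and> L \<subseteq> U}"

definition plane_imO :: "'a::field cd3 set \<Rightarrow> bool" where
  "plane_imO U \<longleftrightarrow> subspO U \<and> dimO U = 2 \<and> U \<subseteq> imO"

definition typeM :: "'a::field \<Rightarrow> 'a \<Rightarrow> 'a \<Rightarrow> 'a cd3 set \<Rightarrow> bool" where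
  "typeM \<alpha> \<beta> \<gamma> U \<longleftrightarrow> plane_imO U \<and> card (nil_lines_in \<alpha> \<beta> \<gamma> U) = 2"

definition typeU :: "'a::field \<Rightarrow> 'a \<Rightarrow> 'a \<Rightarrow> 'a cd3 set \<Rightarrow> bool" where
  "typeU \<alpha> \<beta> \<gamma> U \<longleftrightarrow> plane_imO U \<and>
     (\<exists>u. u \<noteq> 0 \<and> nil_lines_in \<alpha> \<beta> \<gamma> U = {spanO {u}} \<and>
          (\<forall>v\<in>U. multO \<alpha> \<beta> \<gamma> u v \<in> spanO {u}))"

definition assoc_subalg4 :: "'a::field \<Rightarrow> 'a \<Rightarrow> 'a \<Rightarrow> 'a cd3 set \<Rightarrow> bool" where
  "assoc_subalg4 \<alpha> \<beta> \<gamma> H \<longleftrightarrow> subspO H \<and> dimO H = 4 \<and> oneO \<in> H \<and>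
     (\<forall>x\<in>H. \<forall>y\<in>H. multO \<alpha> \<beta> \<gamma> x y \<in> H) \<and>
     (\<forall>x\<in>H. \<forall>y\<in>H. \<forall>z\<in>H.
        multO \<alpha> \<beta> \<gamma> (multO \<alpha> \<beta> \<gamma> x y) z = multO \<alpha> \<beta> \<gamma> x (multO \<alpha> \<beta> \<gamma> y z))"

definition imH :: "'a::field cd3 set \<Rightarrow> 'a cd3 set" where
  "imH H = H \<inter> imO"

definition subspace_design_2_3_1 :: "'a::field cd3 set \<Rightarrow> 'a cd3 set set \<Rightarrow> bool" where
  "subspace_design_2_3_1 V \<B> \<longleftrightarrow>
     (\<forall>B\<in>\<B>. subspO B \<and> dimO B = 3 \<and> B \<subseteq> V) \<and>
     (\<forall>U. subspO U \<and> dimO U = 2 \<and> U \<subseteq> V \<longrightarrow> (\<exists>!B. B \<in> \<B> \<and> U \<subseteq> B))"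

end

theory Submission
  imports Defs
begin

text \<open>Let N be the norm form of O and B its polar form. An imaginary element is nilpotent
  exactly when it is isotropic. As O is split there are isotropic imaginary p, q with
  B p q \<noteq> 0: the plane spanned by p and q has type M, and with h = pq - qp the plane spanned
  by p and h has type U. Correcting q by p z, for an anisotropic z orthogonal to 1, p, q, h,
  gives a second isotropic imaginary q' with pq' - q'p = h such that 1, p, q, h, q' are linearly
  independent. If the planes spanned by p, q and by p, q' lie in im(H1) and im(H2), then the
  type U plane lies in both, and H1 \<noteq> H2 since no 4-dimensional H contains five independent
  vectors; otherwise one of the two type M planes lies in no block.\<close>

section \<open>Coordinates, norm and real part\<close>

definition octO :: "'a \<Rightarrow> 'a \<Rightarrow> 'a \<Rightarrow> 'a \<Rightarrow> 'a \<Rightarrow> 'a \<Rightarrow> 'a \<Rightarrow> 'a \<Rightarrow> 'a cd3" where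
  "octO a0 a1 a2 a3 a4 a5 a6 a7 = (((a0, a1), (a2, a3)), ((a4, a5), (a6, a7)))"

lemma cd3_induct:
  "(\<And>a0 a1 a2 a3 a4 a5 a6 a7. P (octO a0 a1 a2 a3 a4 a5 a6 a7)) \<Longrightarrow> P x"
  unfolding octO_def by (metis prod.collapse)

text \<open>Keeps the simplifier from splitting quantified elements of O into eight coordinates.\<close>
declare split_paired_All [simp del] split_paired_Ex [simp del]

text \<open>The norm form: x times its conjugate is N(x) times 1.\<close>
definition normO :: "'a::field \<Rightarrow> 'a \<Rightarrow> 'a \<Rightarrow> 'a cd3 \<Rightarrow> 'a" where
  "normO \<alpha> \<beta> \<gamma> x = (case x of (((a0, a1), (a2, a3)), ((a4, a5), (a6, a7))) \<Rightarrow>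
     a0 * a0 - \<alpha> * a1 * a1 - \<beta> * (a2 * a2 - \<alpha> * a3 * a3)
     - \<gamma> * (a4 * a4 - \<alpha> * a5 * a5 - \<beta> * (a6 * a6 - \<alpha> * a7 * a7)))"

definition polarO :: "'a::field \<Rightarrow> 'a \<Rightarrow> 'a \<Rightarrow> 'a cd3 \<Rightarrow> 'a cd3 \<Rightarrow> 'a" where
  "polarO \<alpha> \<beta> \<gamma> x y = normO \<alpha> \<beta> \<gamma> (x + y) - normO \<alpha> \<beta> \<gamma> x - normO \<alpha> \<beta> \<gamma> y"

definition reO :: "'a::field cd3 \<Rightarrow> 'a" where
  "reO x = fst (fst (fst x))"

lemmas cd3_simps = multO_def mult2_def mult1_def scale1_def scale2_def scaleO_def
  conj1_def conj2_def conjO_def oneO_def octO_def normO_def polarO_def reO_def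

interpretation V: vector_space "scaleO :: 'a::field \<Rightarrow> 'a cd3 \<Rightarrow> 'a cd3"
  by unfold_locales (simp_all add: cd3_simps algebra_simps)

lemma reO_add: "reO (x + y) = reO x + reO y"
  by (simp add: reO_def)

lemma reO_diff: "reO (x - y) = reO x - reO y"
  by (simp add: reO_def)

lemma reO_scale: "reO (scaleO c x) = c * reO x"
  by (simp add: cd3_simps)

lemma reO_one: "reO oneO = 1"
  by (simp add: cd3_simps)

lemma oneO_neq_zero: "oneO \<noteq> 0"
  by (simp add: oneO_def zero_prod_def)

lemma conjO_eq: "conjO x = scaleO (2 * reO x) oneO - x"
  by (induct x rule: cd3_induct) (simp add: cd3_simps)

lemma imO_iff_reO: "(2::'a::field) \<noteq> 0 \<Longrightarrow> (x::'a cd3) \<in> imO \<longleftrightarrow> reO x = 0"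
  by (induct x rule: cd3_induct) (auto simp: imO_def cd3_simps)

lemma subspace_imO: "V.subspace imO"
  by (intro V.subspaceI) (auto simp: imO_def cd3_simps zero_prod_def)

section \<open>Lines and planes\<close>

lemma span_singleton_iff: "x \<in> V.span {p} \<longleftrightarrow> (\<exists>a. x = scaleO a p)"
  unfolding V.span_singleton by blast

lemma span_pair_iff: "x \<in> V.span {p, q} \<longleftrightarrow> (\<exists>a b. x = scaleO a p + scaleO b q)"
proof
  assume "x \<in> V.span {p, q}"
  then obtain a where "x - scaleO a p \<in> V.span {q}"
    using V.span_breakdown_eq by blast
  then obtain b where "x - scaleO a p = scaleO b q"
    using span_singleton_iff by blast
  then show "\<exists>a b. x = scaleO a p + scaleO b q"
    by (simp add: algebra_simps) (metis add.commute diff_add_cancel)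
next
  assume "\<exists>a b. x = scaleO a p + scaleO b q"
  then obtain a b where "x = scaleO a p + scaleO b q"
    by blast
  then have "x - scaleO a p = scaleO b q"
    by simp
  then show "x \<in> V.span {p, q}"
    using V.span_breakdown_eq span_singleton_iff by blast
qed

lemma span_singleton_scale:
  assumes "(a::'a::field) \<noteq> 0"
  shows "V.span {scaleO a p} = V.span {p}"
proof (rule set_eqI)
  fix x
  have "x = scaleO k (scaleO a p) \<longleftrightarrow> x = scaleO (k * a) p" for k
    by simp
  moreover have "x = scaleO k p \<longleftrightarrow> x = scaleO (k / a) (scaleO a p)" for k
    using assms by simp
  ultimately show "x \<in> V.span {scaleO a p} \<longleftrightarrow> x \<in> V.span {p}"
    unfolding span_singleton_iff by metis
qed

lemma dim_singleton: "v \<noteq> 0 \<Longrightarrow> V.dim {v} = 1"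
  using V.dim_eq_card_independent[of "{v}"] V.independent_insertI[of v "{}"]
  by (simp add: V.independent_empty)

lemma dim_one_eq_span_singleton:
  assumes "V.subspace L" "V.dim L = 1"
  obtains v where "v \<noteq> 0" "L = V.span {v}"
proof -
  obtain S where S: "S \<subseteq> L" "V.independent S" "L \<subseteq> V.span S" "card S = 1"
    using V.basis_exists assms(2) by (metis (no_types))
  then obtain v where "S = {v}"
    by (meson card_1_singletonE)
  moreover have "V.span S \<subseteq> L"
    using V.span_minimal S(1) assms(1) by blast
  ultimately show ?thesis
    using that S(2,3) V.dependent_zero by auto
qed

lemma card_independent_le_dim:
  assumes "V.independent S" "S \<subseteq> H" "0 < V.dim H"
  shows "card S \<le> V.dim H"
proof -
  obtain T where T: "H \<subseteq> V.span T" "card T = V.dim H"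
    using V.basis_exists by (metis (no_types))
  then have "finite T"
    using assms(3) card_ge_0_finite by metis
  then show ?thesis
    using V.independent_span_bound[of T S] assms(1,2) T by auto
qed

section \<open>Identities in the Cayley algebra\<close>

locale cayley_algebra =
  fixes \<alpha> \<beta> \<gamma> :: "'a::field"
begin

abbreviation M where "M \<equiv> multO \<alpha> \<beta> \<gamma>"
abbreviation N where "N \<equiv> normO \<alpha> \<beta> \<gamma>"
abbreviation B where "B \<equiv> polarO \<alpha> \<beta> \<gamma>"

lemma mult_add_right: "M x (y + z) = M x y + M x z"
  by (induct x rule: cd3_induct; induct y rule: cd3_induct; induct z rule: cd3_induct)
    (simp add: cd3_simps; algebra)

lemma mult_add_left: "M (x + y) z = M x z + M y z"
  by (induct x rule: cd3_induct; induct y rule: cd3_induct; induct z rule: cd3_induct)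
    (simp add: cd3_simps; algebra)

lemma mult_diff_right: "M x (y - z) = M x y - M x z"
  by (induct x rule: cd3_induct; induct y rule: cd3_induct; induct z rule: cd3_induct)
    (simp add: cd3_simps; algebra)

lemma mult_diff_left: "M (x - y) z = M x z - M y z"
  by (induct x rule: cd3_induct; induct y rule: cd3_induct; induct z rule: cd3_induct)
    (simp add: cd3_simps; algebra)

lemma mult_scale_right: "M x (scaleO c y) = scaleO c (M x y)"
  by (induct x rule: cd3_induct; induct y rule: cd3_induct) (simp add: cd3_simps; algebra)

lemma mult_scale_left: "M (scaleO c x) y = scaleO c (M x y)"
  by (induct x rule: cd3_induct; induct y rule: cd3_induct) (simp add: cd3_simps; algebra)

lemma mult_neg_right: "M x (- y) = - M x y"
  by (induct x rule: cd3_induct; induct y rule: cd3_induct) (simp add: cd3_simps; algebra)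

lemma mult_neg_left: "M (- x) y = - M x y"
  by (induct x rule: cd3_induct; induct y rule: cd3_induct) (simp add: cd3_simps; algebra)

lemma mult_zero_right: "M x 0 = 0"
  by (induct x rule: cd3_induct) (simp add: cd3_simps zero_prod_def)

lemma mult_zero_left: "M 0 x = 0"
  by (induct x rule: cd3_induct) (simp add: cd3_simps zero_prod_def)

lemma mult_one_right: "M x oneO = x"
  by (induct x rule: cd3_induct) (simp add: cd3_simps)

lemma conj_mult: "conjO (M x y) = M (conjO y) (conjO x)"
  by (induct x rule: cd3_induct; induct y rule: cd3_induct) (simp add: cd3_simps; algebra)

lemma left_alternative: "M x (M x y) = M (M x x) y"
  by (induct x rule: cd3_induct; induct y rule: cd3_induct) (simp add: cd3_simps; algebra)

lemma conj_mult_cancel_left: "M (conjO x) (M x y) = scaleO (N x) y"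
  by (induct x rule: cd3_induct; induct y rule: cd3_induct) (simp add: cd3_simps; algebra)

lemma mult_conj_cancel_right: "M (M x y) (conjO y) = scaleO (N y) x"
  by (induct x rule: cd3_induct; induct y rule: cd3_induct) (simp add: cd3_simps; algebra)

lemma norm_mult: "N (M x y) = N x * N y"
  by (induct x rule: cd3_induct; induct y rule: cd3_induct) (simp add: cd3_simps; algebra)

lemma polar_mult_left_adjoint: "B (M x y) z = B y (M (conjO x) z)"
  by (induct x rule: cd3_induct; induct y rule: cd3_induct; induct z rule: cd3_induct)
    (simp add: cd3_simps; algebra)

lemma polar_mult_right: "B (M y x) (M z x) = N x * B y z"
  by (induct x rule: cd3_induct; induct y rule: cd3_induct; induct z rule: cd3_induct)
    (simp add: cd3_simps; algebra)

lemma polar_mult_self_left: "B x (M x y) = 2 * N x * reO y"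
  by (induct x rule: cd3_induct; induct y rule: cd3_induct) (simp add: cd3_simps; algebra)

lemma polar_mult_self_right: "B x (M y x) = 2 * N x * reO y"
  by (induct x rule: cd3_induct; induct y rule: cd3_induct) (simp add: cd3_simps; algebra)

lemma polar_one: "B x oneO = 2 * reO x"
  by (induct x rule: cd3_induct) (simp add: cd3_simps; algebra)

lemma norm_zero: "N 0 = 0"
  by (simp add: cd3_simps zero_prod_def)

lemma polar_commute: "B x y = B y x"
  by (simp add: polarO_def add.commute)

lemma polar_add_left: "B (x + y) z = B x z + B y z"
  by (induct x rule: cd3_induct; induct y rule: cd3_induct; induct z rule: cd3_induct)
    (simp add: cd3_simps; algebra)

lemma polar_diff_left: "B (x - y) z = B x z - B y z"
  by (induct x rule: cd3_induct; induct y rule: cd3_induct; induct z rule: cd3_induct)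
    (simp add: cd3_simps; algebra)

lemma polar_scale_left: "B (scaleO c x) y = c * B x y"
  by (induct x rule: cd3_induct; induct y rule: cd3_induct) (simp add: cd3_simps; algebra)

lemma polar_add_right: "B x (y + z) = B x y + B x z"
  by (simp add: polar_commute[of x] polar_add_left)

lemma polar_diff_right: "B x (y - z) = B x y - B x z"
  by (simp add: polar_commute[of x] polar_diff_left)

lemma polar_scale_right: "B x (scaleO c y) = c * B x y"
  by (simp add: polar_commute[of x] polar_scale_left)

lemma polar_neg_right: "B x (- y) = - B x y"
  using polar_diff_right[of x 0 y] by (simp add: polarO_def norm_zero)

lemma polar_zero_left: "B 0 x = 0"
  by (simp add: polarO_def norm_zero)

lemma polar_zero_right: "B x 0 = 0"
  by (simp add: polarO_def norm_zero)

lemma polar_self: "B x x = 2 * N x"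
  by (induct x rule: cd3_induct) (simp add: cd3_simps; algebra)

lemma norm_add: "N (x + y) = N x + N y + B x y"
  by (simp add: polarO_def)

lemma norm_diff: "N (x - y) = N x + N y - B x y"
  by (induct x rule: cd3_induct; induct y rule: cd3_induct) (simp add: cd3_simps; algebra)

lemma norm_scale: "N (scaleO c x) = c\<^sup>2 * N x"
  by (induct x rule: cd3_induct) (simp add: cd3_simps; algebra)

lemma norm_one: "N oneO = 1"
  by (simp add: cd3_simps zero_prod_def)

lemma norm_linear_combination: "N (scaleO a x + scaleO b y) = a\<^sup>2 * N x + b\<^sup>2 * N y + a * b * B x y"
  by (simp add: norm_add norm_scale polar_scale_left polar_scale_right)

lemma conj_imaginary: "reO x = 0 \<Longrightarrow> conjO x = - x"
  by (simp add: conjO_eq)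

lemma square_imaginary: "reO x = 0 \<Longrightarrow> M x x = scaleO (- N x) oneO"
  by (induct x rule: cd3_induct) (clarsimp simp: cd3_simps; algebra)

lemma anticommutator_imaginary:
  "reO x = 0 \<Longrightarrow> reO y = 0 \<Longrightarrow> M x y + M y x = scaleO (- B x y) oneO"
  by (induct x rule: cd3_induct; induct y rule: cd3_induct) (clarsimp simp: cd3_simps; algebra)

lemma flexible_imaginary:
  "reO x = 0 \<Longrightarrow> reO y = 0 \<Longrightarrow> M x (M y x) = scaleO (- B x y) x + scaleO (N x) y"
  by (induct x rule: cd3_induct; induct y rule: cd3_induct) (clarsimp simp: cd3_simps; algebra)

lemma norm_commutator_imaginary:
  "reO x = 0 \<Longrightarrow> reO y = 0 \<Longrightarrow> N (M x y - M y x) = 4 * N x * N y - (B x y)\<^sup>2"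
  by (induct x rule: cd3_induct; induct y rule: cd3_induct) (clarsimp simp: cd3_simps; algebra)

lemma reO_commutator_imaginary:
  "reO x = 0 \<Longrightarrow> reO y = 0 \<Longrightarrow> reO (M x y - M y x) = 0"
  by (induct x rule: cd3_induct; induct y rule: cd3_induct) (clarsimp simp: cd3_simps; algebra)

section \<open>Nilpotent lines and planes of type M and U\<close>

lemma powO_imaginary:
  assumes "reO x = 0"
  shows "powO \<alpha> \<beta> \<gamma> x (2 * k) = scaleO ((- N x) ^ k) oneO"
    and "powO \<alpha> \<beta> \<gamma> x (2 * k + 1) = scaleO ((- N x) ^ k) x"
proof -
  have "powO \<alpha> \<beta> \<gamma> x (2 * k) = scaleO ((- N x) ^ k) oneO \<and>
    powO \<alpha> \<beta> \<gamma> x (2 * k + 1) = scaleO ((- N x) ^ k) x"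
  proof (induction k)
    case 0
    then show ?case by (simp add: mult_one_right)
  next
    case (Suc k)
    have "powO \<alpha> \<beta> \<gamma> x (2 * Suc k) = M x (powO \<alpha> \<beta> \<gamma> x (2 * k + 1))"
      by simp
    also have "\<dots> = scaleO ((- N x) ^ k) (M x x)"
      using Suc.IH by (simp only: mult_scale_right)
    also have "\<dots> = scaleO ((- N x) ^ Suc k) oneO"
      by (simp add: square_imaginary[OF assms] mult.commute)
    finally have even: "powO \<alpha> \<beta> \<gamma> x (2 * Suc k) = scaleO ((- N x) ^ Suc k) oneO" .
    have "powO \<alpha> \<beta> \<gamma> x (2 * Suc k + 1) = M x (powO \<alpha> \<beta> \<gamma> x (2 * Suc k))"
      by simp
    then show ?case
      using even by (simp only: mult_scale_right mult_one_right)
  qed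
  then show "powO \<alpha> \<beta> \<gamma> x (2 * k) = scaleO ((- N x) ^ k) oneO"
    and "powO \<alpha> \<beta> \<gamma> x (2 * k + 1) = scaleO ((- N x) ^ k) x"
    by blast+
qed

lemma nilpotent_imaginary_iff:
  assumes "reO x = 0"
  shows "nilpotentO \<alpha> \<beta> \<gamma> x \<longleftrightarrow> N x = 0"
proof
  assume "N x = 0"
  then have "powO \<alpha> \<beta> \<gamma> x (2 * 1) = 0"
    using powO_imaginary(1)[OF assms, of 1] by simp
  then show "nilpotentO \<alpha> \<beta> \<gamma> x"
    unfolding nilpotentO_def by blast
next
  assume "nilpotentO \<alpha> \<beta> \<gamma> x"
  then obtain n where n: "powO \<alpha> \<beta> \<gamma> x n = 0"
    unfolding nilpotentO_def by blast
  show "N x = 0"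
  proof (rule ccontr)
    assume "N x \<noteq> 0"
    then have "x \<noteq> 0"
      using norm_zero by auto
    moreover obtain m where "n = 2 * m \<or> n = 2 * m + 1"
      by (metis odd_two_times_div_two_succ dvd_mult_div_cancel)
    ultimately show False
      using n powO_imaginary[OF assms, of m] \<open>N x \<noteq> 0\<close> oneO_neq_zero by auto
  qed
qed

lemma nil_line_span:
  assumes "p \<noteq> 0" "reO p = 0" "N p = 0"
  shows "nil_line \<alpha> \<beta> \<gamma> (V.span {p})"
  unfolding nil_line_def
proof (intro conjI ballI)
  show "V.subspace (V.span {p})" "V.dim (V.span {p}) = 1"
    using assms(1) by (simp_all add: dim_singleton)
next
  fix x assume "x \<in> V.span {p}"
  then obtain k where "x = scaleO k p"
    using span_singleton_iff by blast
  then show "nilpotentO \<alpha> \<beta> \<gamma> x"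
    using assms by (simp add: nilpotent_imaginary_iff reO_scale norm_scale)
qed

lemma polar_span_eq_zero:
  assumes "\<forall>s\<in>S. B s w = 0" "x \<in> V.span S"
  shows "B x w = 0"
proof -
  have "V.subspace {x. B x w = 0}"
    by (intro V.subspaceI) (simp_all add: polar_zero_left polar_add_left polar_scale_left)
  then have "V.span S \<subseteq> {x. B x w = 0}"
    using assms(1) by (intro V.span_minimal) auto
  then show ?thesis
    using assms(2) by blast
qed

lemma independent_insert_polar:
  assumes "V.independent S" "\<forall>s\<in>S. B s w = 0" "B a w \<noteq> 0"
  shows "V.independent (insert a S)" "a \<notin> S"
proof -
  have "a \<notin> V.span S"
    using polar_span_eq_zero[OF assms(2)] assms(3) by blast
  then show "V.independent (insert a S)" "a \<notin> S"
    using V.independent_insertI[OF _ assms(1)] V.span_base by blast+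
qed

lemma independent_orthogonal:
  assumes "\<And>a. a \<in> S \<Longrightarrow> B a a \<noteq> 0"
    and "\<And>a b. a \<in> S \<Longrightarrow> b \<in> S \<Longrightarrow> a \<noteq> b \<Longrightarrow> B a b = 0"
  shows "V.independent S"
proof
  assume "V.dependent S"
  then obtain a where a: "a \<in> S" "a \<in> V.span (S - {a})"
    unfolding V.dependent_def by blast
  then have "B a a = 0"
    using assms(2) by (intro polar_span_eq_zero[of "S - {a}"]) auto
  then show False
    using assms(1) a(1) by blast
qed

lemma nil_lines_in_imaginary:
  assumes "(2::'a) \<noteq> 0" "L \<in> nil_lines_in \<alpha> \<beta> \<gamma> U" "U \<subseteq> imO"
  obtains v where "v \<noteq> 0" "L = V.span {v}" "v \<in> U" "reO v = 0" "N v = 0"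
proof -
  have L: "nil_line \<alpha> \<beta> \<gamma> L" "L \<subseteq> U"
    using assms(2) unfolding nil_lines_in_def by blast+
  then obtain v where v: "v \<noteq> 0" "L = V.span {v}"
    unfolding nil_line_def by (metis dim_one_eq_span_singleton)
  then have "v \<in> U" "nilpotentO \<alpha> \<beta> \<gamma> v"
    using L V.span_base unfolding nil_line_def by blast+
  moreover have "reO v = 0"
    using \<open>v \<in> U\<close> assms(1,3) imO_iff_reO by blast
  ultimately show ?thesis
    using that v nilpotent_imaginary_iff by blast
qed

lemma plane_imO_span_pair:
  fixes p q :: "'a cd3"
  assumes "(2::'a) \<noteq> 0" "reO p = 0" "reO q = 0" "p \<noteq> 0" "q \<notin> V.span {p}"
  shows "plane_imO (V.span {p, q})"
proof -
  have "V.independent {q, p}"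
    using assms(4,5) by (intro V.independent_insertI) (simp_all add: V.independent_empty)
  moreover have "q \<noteq> p"
    using assms(5) V.span_base by blast
  moreover have "V.span {p, q} \<subseteq> imO"
    using assms(2,3) by (intro V.span_minimal subspace_imO) (simp add: imO_iff_reO[OF assms(1)])
  ultimately show ?thesis
    unfolding plane_imO_def by (simp add: V.dim_eq_card_independent insert_commute)
qed

lemma typeM_span_pair:
  assumes two: "(2::'a) \<noteq> 0"
    and p: "reO p = 0" "N p = 0" and q: "reO q = 0" "N q = 0" and pq: "B p q \<noteq> 0"
  shows "typeM \<alpha> \<beta> \<gamma> (V.span {p, q})"
proof -
  have "p \<noteq> 0"
    by (metis pq polar_zero_left)
  have "q \<noteq> 0"
    by (metis pq polar_zero_right)
  have q_notin: "q \<notin> V.span {p}"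
  proof
    assume "q \<in> V.span {p}"
    then obtain k where "q = scaleO k p"
      using span_singleton_iff by blast
    then show False
      using pq p(2) by (simp add: polar_scale_right polar_self)
  qed
  have plane: "plane_imO (V.span {p, q})"
    using plane_imO_span_pair[OF two p(1) q(1) \<open>p \<noteq> 0\<close> q_notin] .
  have "L \<in> {V.span {p}, V.span {q}}" if L: "L \<in> nil_lines_in \<alpha> \<beta> \<gamma> (V.span {p, q})" for L
  proof -
    obtain v where v: "v \<noteq> 0" "L = V.span {v}" "v \<in> V.span {p, q}" "N v = 0"
      using nil_lines_in_imaginary[OF two L] plane unfolding plane_imO_def by metis
    then obtain a c where v_eq: "v = scaleO a p + scaleO c q"
      using span_pair_iff by blast
    then have "a * c * B p q = 0"
      using v(4) p q by (simp add: norm_linear_combination)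
    then have "a = 0 \<and> c \<noteq> 0 \<or> c = 0 \<and> a \<noteq> 0"
      using pq v(1) v_eq by auto
    then have "L = V.span {q} \<or> L = V.span {p}"
      using v(2) v_eq by (auto simp: span_singleton_scale)
    then show ?thesis
      by blast
  qed
  moreover have "{V.span {p}, V.span {q}} \<subseteq> nil_lines_in \<alpha> \<beta> \<gamma> (V.span {p, q})"
    unfolding nil_lines_in_def
    using nil_line_span \<open>p \<noteq> 0\<close> \<open>q \<noteq> 0\<close> p q
      V.span_mono[of "{p}" "{p, q}"] V.span_mono[of "{q}" "{p, q}"]
    by blast
  moreover have "V.span {p} \<noteq> V.span {q}"
    using q_notin V.span_base by blast
  ultimately show ?thesis
    using plane unfolding typeM_def by (metis card_2_iff subsetI subset_antisym)
qed

lemma typeU_span_pair: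
  assumes two: "(2::'a) \<noteq> 0" and p: "reO p = 0" "N p = 0" "p \<noteq> 0" "M p p = 0"
    and h: "reO h = 0" "N h \<noteq> 0" "B p h = 0" "M p h \<in> V.span {p}"
  shows "typeU \<alpha> \<beta> \<gamma> (V.span {p, h})"
proof -
  have h_notin: "h \<notin> V.span {p}"
    using h(2) p(2) by (auto simp: span_singleton_iff norm_scale)
  have plane: "plane_imO (V.span {p, h})"
    using plane_imO_span_pair[OF two p(1) h(1) p(3) h_notin] .
  have "L = V.span {p}" if L: "L \<in> nil_lines_in \<alpha> \<beta> \<gamma> (V.span {p, h})" for L
  proof -
    obtain v where v: "v \<noteq> 0" "L = V.span {v}" "v \<in> V.span {p, h}" "N v = 0"
      using nil_lines_in_imaginary[OF two L] plane unfolding plane_imO_def by metis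
    then obtain a c where v_eq: "v = scaleO a p + scaleO c h"
      using span_pair_iff by blast
    then have "c\<^sup>2 * N h = 0"
      using v(4) p(2) h(3) by (simp add: norm_linear_combination)
    then have "v = scaleO a p" "a \<noteq> 0"
      using h(2) v(1) v_eq by auto
    then show ?thesis
      using v(2) span_singleton_scale by metis
  qed
  moreover have "V.span {p} \<in> nil_lines_in \<alpha> \<beta> \<gamma> (V.span {p, h})"
    unfolding nil_lines_in_def using nil_line_span[OF p(3,1,2)] V.span_mono[of "{p}" "{p, h}"]
    by blast
  moreover have "M p v \<in> V.span {p}" if v: "v \<in> V.span {p, h}" for v
  proof -
    obtain a c where "v = scaleO a p + scaleO c h"
      using v span_pair_iff by blast
    then have "M p v = scaleO c (M p h)"
      using p(4) by (simp add: mult_add_right mult_scale_right)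
    then show ?thesis
      using V.span_scale[OF h(4)] by simp
  qed
  ultimately show ?thesis
    unfolding typeU_def using plane p(3) by blast
qed

lemma not_subspace_design_2_3_1_if_badly_covered:
  fixes \<B> :: "'a cd3 set set"
  assumes "(\<exists>U. typeM \<alpha> \<beta> \<gamma> U \<and> (\<forall>B\<in>\<B>. \<not> U \<subseteq> B)) \<or>
    (\<exists>U. typeU \<alpha> \<beta> \<gamma> U \<and> (\<exists>B1\<in>\<B>. \<exists>B2\<in>\<B>. B1 \<noteq> B2 \<and> U \<subseteq> B1 \<and> U \<subseteq> B2))"
  shows "\<not> subspace_design_2_3_1 imO \<B>"
proof
  assume "subspace_design_2_3_1 imO \<B>"
  then have design: "\<forall>U. V.subspace U \<and> V.dim U = 2 \<and> U \<subseteq> imO \<longrightarrow>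
      (\<exists>!B. B \<in> \<B> \<and> U \<subseteq> B)"
    unfolding subspace_design_2_3_1_def by (rule conjunct2)
  have unique: "\<exists>!B. B \<in> \<B> \<and> U \<subseteq> B" if "plane_imO U" for U
    by (rule mp[OF spec[OF design, of U]]) (use that in \<open>simp add: plane_imO_def\<close>)
  from assms show False
  proof
    assume "\<exists>U. typeM \<alpha> \<beta> \<gamma> U \<and> (\<forall>B\<in>\<B>. \<not> U \<subseteq> B)"
    then obtain U where "typeM \<alpha> \<beta> \<gamma> U" "\<forall>B\<in>\<B>. \<not> U \<subseteq> B"
      by blast
    then show False
      using ex1_implies_ex[OF unique[of U]] unfolding typeM_def by blast
  next
    assume "\<exists>U. typeU \<alpha> \<beta> \<gamma> U \<and>
      (\<exists>B1\<in>\<B>. \<exists>B2\<in>\<B>. B1 \<noteq> B2 \<and> U \<subseteq> B1 \<and> U \<subseteq> B2)"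
    then obtain U B1 B2 where U: "typeU \<alpha> \<beta> \<gamma> U" and B12: "B1 \<in> \<B>" "B2 \<in> \<B>"
      "B1 \<noteq> B2" "U \<subseteq> B1" "U \<subseteq> B2"
      by blast
    from U have "plane_imO U"
      unfolding typeU_def by (rule conjunct1)
    then have "\<exists>!B. B \<in> \<B> \<and> U \<subseteq> B"
      by (rule unique)
    then show False
      using B12 by blast
  qed
qed

end

section \<open>Isotropic vectors and hyperbolic pairs\<close>

definition coord_basisO :: "'a::field cd3 set" where
  "coord_basisO = {octO 1 0 0 0 0 0 0 0, octO 0 1 0 0 0 0 0 0, octO 0 0 1 0 0 0 0 0,
     octO 0 0 0 1 0 0 0 0, octO 0 0 0 0 1 0 0 0, octO 0 0 0 0 0 1 0 0,
     octO 0 0 0 0 0 0 1 0, octO 0 0 0 0 0 0 0 1}"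

lemma card_coord_basisO: "card (coord_basisO :: 'a::field cd3 set) = 8"
  by (simp add: coord_basisO_def octO_def)

locale nondegenerate_cayley_algebra = cayley_algebra +
  assumes two_neq_zero: "(2::'a) \<noteq> 0"
    and params_neq_zero: "\<alpha> \<noteq> 0" "\<beta> \<noteq> 0" "\<gamma> \<noteq> 0"
begin

lemma polar_nondegenerate:
  assumes "(x::'a cd3) \<noteq> 0"
  obtains e where "B x e \<noteq> 0"
proof -
  have "(\<forall>e. B x e = 0) \<longrightarrow> x = 0"
  proof (induct x rule: cd3_induct)
    case (1 a0 a1 a2 a3 a4 a5 a6 a7)
    show ?case
    proof
      assume all: "\<forall>e. B (octO a0 a1 a2 a3 a4 a5 a6 a7) e = 0"
      show "octO a0 a1 a2 a3 a4 a5 a6 a7 = 0"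
        using all[rule_format, of "octO 1 0 0 0 0 0 0 0"] all[rule_format, of "octO 0 1 0 0 0 0 0 0"]
          all[rule_format, of "octO 0 0 1 0 0 0 0 0"] all[rule_format, of "octO 0 0 0 1 0 0 0 0"]
          all[rule_format, of "octO 0 0 0 0 1 0 0 0"] all[rule_format, of "octO 0 0 0 0 0 1 0 0"]
          all[rule_format, of "octO 0 0 0 0 0 0 1 0"] all[rule_format, of "octO 0 0 0 0 0 0 0 1"]
          two_neq_zero params_neq_zero
        by (simp add: octO_def normO_def polarO_def zero_prod_def algebra_simps)
    qed
  qed
  then show ?thesis
    using assms that by blast
qed

lemma independent_coord_basisO: "V.independent (coord_basisO :: 'a cd3 set)"
proof (rule independent_orthogonal)
  fix a assume "a \<in> (coord_basisO :: 'a cd3 set)"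
  then show "B a a \<noteq> 0"
    using two_neq_zero params_neq_zero unfolding coord_basisO_def
    by (elim insertE emptyE) (simp_all add: octO_def normO_def polarO_def algebra_simps)
next
  fix a b assume "a \<in> (coord_basisO :: 'a cd3 set)" "b \<in> coord_basisO" "a \<noteq> b"
  then show "B a b = 0"
    unfolding coord_basisO_def
    by (elim insertE emptyE) (simp_all add: octO_def normO_def polarO_def algebra_simps)
qed

text \<open>P projects onto the orthogonal complement of S along the span of S, which forces that
  complement to be nondegenerate.\<close>

lemma exists_anisotropic_orthogonal:
  assumes "finite S" "card S < 8"
    and P_orth: "\<And>w v. v \<in> S \<Longrightarrow> B (P w) v = 0" and P_span: "\<And>w. w - P w \<in> V.span S"
  obtains z where "\<forall>v\<in>S. B z v = 0" "N z \<noteq> 0"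
proof -
  have "\<exists>w. P w \<noteq> 0"
  proof (rule ccontr)
    assume "\<nexists>w. P w \<noteq> 0"
    then have "coord_basisO \<subseteq> V.span S"
      using P_span by fastforce
    then have "card (coord_basisO :: 'a cd3 set) \<le> card S"
      using V.independent_span_bound[OF assms(1) independent_coord_basisO] by blast
    then show False
      using assms(2) by (simp add: card_coord_basisO)
  qed
  then obtain w where w: "P w \<noteq> 0"
    by blast
  define z0 where "z0 = P w"
  obtain e where e: "B z0 e \<noteq> 0"
    using polar_nondegenerate w z0_def by blast
  define z1 where "z1 = P e"
  have z0_orth: "\<forall>v\<in>S. B z0 v = 0" and z1_orth: "\<forall>v\<in>S. B z1 v = 0"
    using P_orth z0_def z1_def by blast+
  have "B z0 (e - z1) = 0"
    using P_span[of e] z0_orth polar_span_eq_zero polar_commute z1_def by metis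
  then have B01: "B z0 z1 = B z0 e"
    by (simp add: polar_diff_right)
  consider "N z0 \<noteq> 0" | "N z1 \<noteq> 0" | "N z0 = 0" "N z1 = 0"
    by blast
  then show ?thesis
  proof cases
    case 3
    then have "N (z0 + z1) \<noteq> 0"
      using B01 e by (simp add: norm_add)
    moreover have "\<forall>v\<in>S. B (z0 + z1) v = 0"
      using z0_orth z1_orth by (simp add: polar_add_left)
    ultimately show ?thesis
      using that by blast
  qed (use that z0_orth z1_orth in blast)+
qed

lemma exists_hyperbolic_partner:
  assumes p: "reO p = 0" "N p = 0" "p \<noteq> 0"
  obtains q where "reO q = 0" "N q = 0" "B p q \<noteq> 0"
proof -
  obtain e where e: "B p e \<noteq> 0"
    using polar_nondegenerate[OF p(3)] by blast
  define e' where "e' = e - scaleO (reO e) oneO"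
  have e': "reO e' = 0" "B p e' = B p e"
    using p(1) by (simp_all add: e'_def reO_diff reO_scale reO_one polar_diff_right
        polar_scale_right polar_one)
  define q where "q = e' - scaleO (N e' / B p e') p"
  have "reO q = 0"
    using e'(1) p(1) by (simp add: q_def reO_diff reO_scale)
  moreover have "B p q = B p e"
    using e'(2) p(2) by (simp add: q_def polar_diff_right polar_scale_right polar_self)
  moreover have "N q = 0"
    using e e'(2) p(2)
    by (simp add: q_def norm_diff norm_scale polar_scale_right polar_commute[of e'])
  ultimately show ?thesis
    using that e by simp
qed

text \<open>A zero divisor x is isotropic; if x is not imaginary, x e is isotropic and imaginary for
  any anisotropic e orthogonal to 1 and to the imaginary part of x.\<close>

lemma exists_isotropic_imaginary:
  assumes "split_cayley \<alpha> \<beta> \<gamma>"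
  obtains p where "reO p = 0" "N p = 0" "p \<noteq> 0"
proof -
  obtain x y where xy: "x \<noteq> 0" "y \<noteq> 0" "M x y = 0"
    using assms unfolding split_cayley_def by blast
  have "scaleO (N x) y = 0"
    using conj_mult_cancel_left[of x y] xy(3) by (simp add: mult_zero_right)
  then have Nx: "N x = 0"
    using xy(2) by simp
  show ?thesis
  proof (cases "reO x = 0")
    case True
    then show ?thesis
      using that Nx xy(1) by blast
  next
    case False
    define r where "r = reO x"
    define x' where "x' = x - scaleO r oneO"
    have x'_im: "reO x' = 0"
      by (simp add: x'_def reO_diff reO_scale reO_one r_def)
    have x_eq: "x = x' + scaleO r oneO"
      by (simp add: x'_def)
    have "N x = N x' + r\<^sup>2"
      unfolding x_eq by (simp add: norm_add norm_scale norm_one polar_scale_right polar_one x'_im)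
    then have "N x' = - r\<^sup>2"
      using Nx by (simp add: eq_neg_iff_add_eq_0)
    then have Nx': "N x' \<noteq> 0"
      using False r_def by simp
    define P where "P w = w - scaleO (B w oneO / 2) oneO - scaleO (B w x' / (2 * N x')) x'" for w
    have "B (P w) oneO = 0" "B (P w) x' = 0" for w
      using two_neq_zero Nx' by (simp_all add: P_def polar_diff_left polar_scale_left polar_one
          reO_diff reO_scale reO_one x'_im polar_self polar_commute[of oneO])
    then have P_orth: "B (P w) v = 0" if "v \<in> {oneO, x'}" for w v
      using that by blast
    have P_span: "w - P w \<in> V.span {oneO, x'}" for w
      by (simp add: P_def V.span_add V.span_scale V.span_base)
    have "card {oneO, x'} < 8"
      by (simp add: card_insert_if)
    then obtain e where e: "\<forall>v\<in>{oneO, x'}. B e v = 0" "N e \<noteq> 0"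
      using exists_anisotropic_orthogonal[OF _ _ P_orth P_span] by blast
    define p where "p = M x e"
    have "B p oneO = B e (conjO x)"
      by (simp add: p_def polar_mult_left_adjoint mult_one_right)
    also have "\<dots> = 0"
      using e(1) by (simp add: conjO_eq x_eq polar_diff_right polar_scale_right polar_add_right)
    finally have "reO p = 0"
      using two_neq_zero by (simp add: polar_one)
    moreover have "N p = 0"
      by (simp add: p_def norm_mult Nx)
    moreover have "p \<noteq> 0"
      using mult_conj_cancel_right[of x e] e(2) xy(1) by (auto simp: p_def mult_zero_left)
    ultimately show ?thesis
      using that by blast
  qed
qed

lemma commutator_plane_subset_imH:
  assumes "V.subspace H" "\<forall>x\<in>H. \<forall>y\<in>H. M x y \<in> H" "V.span {p, x} \<subseteq> imH H"
  shows "V.span {p, M p x - M x p} \<subseteq> imH H"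
proof -
  have px: "p \<in> imH H" "x \<in> imH H"
    using assms(3) V.span_base by blast+
  then have "M p x - M x p \<in> H"
    using assms(1,2) V.subspace_diff unfolding imH_def by blast
  moreover have "reO (M p x - M x p) = 0"
    using px reO_commutator_imaginary imO_iff_reO[OF two_neq_zero] unfolding imH_def by blast
  ultimately have "{p, M p x - M x p} \<subseteq> imH H"
    using px imO_iff_reO[OF two_neq_zero] unfolding imH_def by blast
  moreover have "V.subspace (imH H)"
    unfolding imH_def using V.subspace_inter[OF assms(1) subspace_imO] .
  ultimately show ?thesis
    by (rule V.span_minimal)
qed

end

locale hyperbolic_pair = nondegenerate_cayley_algebra +
  fixes p q :: "'a cd3"
  assumes p_imaginary: "reO p = 0" and p_isotropic: "N p = 0"
    and q_imaginary: "reO q = 0" and q_isotropic: "N q = 0"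
    and polar_p_q: "B p q \<noteq> 0"
begin

definition comm :: "'a cd3" where
  "comm = M p q - M q p"

definition frame :: "'a cd3 set" where
  "frame = {oneO, p, q, comm}"

lemma p_neq_zero: "p \<noteq> 0"
  by (metis polar_p_q polar_zero_left)

lemma comm_imaginary: "reO comm = 0"
  using reO_commutator_imaginary[OF p_imaginary q_imaginary] by (simp add: comm_def)

lemma norm_comm: "N comm = - (B p q)\<^sup>2"
  using norm_commutator_imaginary[OF p_imaginary q_imaginary]
  by (simp add: comm_def p_isotropic q_isotropic)

lemma polar_p_comm: "B p comm = 0"
  by (simp add: comm_def polar_diff_right polar_mult_self_left polar_mult_self_right p_imaginary
      q_imaginary)

lemma polar_q_comm: "B q comm = 0"
  by (simp add: comm_def polar_diff_right polar_mult_self_left polar_mult_self_right p_imaginary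
      q_imaginary)

lemma mult_p_p: "M p p = 0"
  by (simp add: square_imaginary[OF p_imaginary] p_isotropic)

lemma mult_q_q: "M q q = 0"
  by (simp add: square_imaginary[OF q_imaginary] q_isotropic)

lemma mult_p_comm: "M p comm = scaleO (B p q) p"
  by (simp add: comm_def mult_diff_right left_alternative mult_p_p mult_zero_left
      flexible_imaginary[OF p_imaginary q_imaginary] p_isotropic)

lemma mult_q_comm: "M q comm = scaleO (- B p q) q"
  by (simp add: comm_def mult_diff_right left_alternative mult_q_q mult_zero_left
      flexible_imaginary[OF q_imaginary p_imaginary] q_isotropic polar_commute[of q])

lemma mult_p_q: "M p q = scaleO (1 / 2) comm - scaleO (B p q / 2) oneO"
proof -
  have "M p q + M p q = (M p q - M q p) + (M p q + M q p)"
    by simp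
  also have "\<dots> = comm - scaleO (B p q) oneO"
    by (simp add: comm_def anticommutator_imaginary[OF p_imaginary q_imaginary])
  finally have "M p q + M p q = comm - scaleO (B p q) oneO" .
  then have twice: "scaleO 2 (M p q) = comm - scaleO (B p q) oneO"
    using V.scale_left_distrib[of 1 1 "M p q"] by simp
  have "M p q = scaleO (1 / 2) (scaleO 2 (M p q))"
    using two_neq_zero by simp
  also have "\<dots> = scaleO (1 / 2) comm - scaleO (B p q / 2) oneO"
    unfolding twice by (simp add: V.scale_right_diff_distrib)
  finally show ?thesis .
qed

lemma mult_q_p: "M q p = M p q - comm"
  by (simp add: comm_def)

lemma mult_span_frame:
  assumes "x \<in> {p, q}" "v \<in> frame"
  shows "M x v \<in> V.span frame"
proof -
  have base: "oneO \<in> V.span frame" "p \<in> V.span frame" "q \<in> V.span frame" "comm \<in> V.span frame"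
    by (simp_all add: frame_def V.span_base)
  then have "M p q \<in> V.span frame"
    by (simp add: mult_p_q V.span_diff V.span_scale)
  then show ?thesis
    using assms base
    by (auto simp: frame_def mult_one_right mult_p_p mult_q_q mult_p_comm mult_q_comm mult_q_p
        V.span_zero V.span_scale V.span_diff V.span_neg)
qed

lemma polar_frame:
  "B oneO oneO = 2" "B p oneO = 0" "B q oneO = 0" "B comm oneO = 0"
  "B oneO p = 0" "B oneO q = 0" "B oneO comm = 0"
  "B p p = 0" "B q q = 0" "B comm comm = - 2 * (B p q)\<^sup>2"
  "B q p = B p q" "B comm p = 0" "B comm q = 0" "B p comm = 0" "B q comm = 0"
  using polar_p_comm polar_q_comm
  by (simp_all add: polar_one reO_one p_imaginary q_imaginary comm_imaginary polar_self
      p_isotropic q_isotropic norm_comm polar_commute[of q p] polar_commute[of comm]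
      polar_commute[of oneO] norm_one)

lemma independent_frame: "V.independent {oneO, comm, q, p}" "card {oneO, comm, q, p} = 4"
proof -
  have "V.independent {p}" "p \<notin> {}"
    using independent_insert_polar[of "{}" q p] polar_p_q by (simp_all add: V.independent_empty)
  then have "V.independent {q, p}" "q \<notin> {p}"
    using independent_insert_polar[of "{p}" p q] polar_p_q polar_frame by simp_all
  then have "V.independent {comm, q, p}" "comm \<notin> {q, p}"
    using independent_insert_polar[of "{q, p}" comm comm] polar_p_q polar_frame polar_p_comm
      polar_q_comm two_neq_zero
    by simp_all
  then show "V.independent {oneO, comm, q, p}" "card {oneO, comm, q, p} = 4"
    using independent_insert_polar[of "{comm, q, p}" oneO oneO] polar_frame two_neq_zero
      \<open>q \<notin> {p}\<close> \<open>p \<notin> {}\<close>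
    by simp_all
qed

lemma exists_anisotropic_orthogonal_frame:
  obtains z where "\<forall>v\<in>frame. B z v = 0" "N z \<noteq> 0"
proof -
  define P where "P w = w - scaleO (B w oneO / 2) oneO - scaleO (B w comm / B comm comm) comm
     - scaleO (B w q / B p q) p - scaleO (B w p / B p q) q" for w
  have P_orth: "B (P w) v = 0" if "v \<in> frame" for w v
    using that two_neq_zero polar_p_q unfolding frame_def
    by (elim insertE emptyE)
      (simp_all add: P_def polar_diff_left polar_add_left polar_scale_left polar_frame)
  have P_span: "w - P w \<in> V.span frame" for w
    by (simp add: P_def frame_def V.span_add V.span_diff V.span_neg V.span_scale V.span_base)
  have "finite frame" "card frame < 8"
    by (simp_all add: frame_def card_insert_if)
  then show ?thesis
    using that exists_anisotropic_orthogonal[OF _ _ P_orth P_span] by blast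
qed

lemma polar_mult_orthogonal_frame:
  assumes "x \<in> {p, q}" "\<forall>v\<in>frame. B z v = 0" "v \<in> frame"
  shows "B (M x z) v = 0"
proof -
  have "reO x = 0"
    using assms(1) p_imaginary q_imaginary by blast
  then have "B (M x z) v = - B z (M x v)"
    by (simp add: polar_mult_left_adjoint conj_imaginary mult_neg_left polar_neg_right)
  also have "B z (M x v) = 0"
    using polar_span_eq_zero[OF _ mult_span_frame[OF assms(1,3)]] assms(2)
    by (metis polar_commute)
  finally show ?thesis
    by simp
qed

text \<open>q' is q corrected by r = p z: as p r = r p = 0 the commutator with p is unchanged,
  while B q' (q z) = N z * B p q \<noteq> 0 puts q' outside the span of the frame.\<close>

lemma exists_second_partner:
  obtains q' where "reO q' = 0" "N q' = 0" "B p q' \<noteq> 0" "comm = M p q' - M q' p"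
    "V.independent {q', oneO, comm, q, p}" "card {q', oneO, comm, q, p} = 5"
proof -
  obtain z where z: "\<forall>v\<in>frame. B z v = 0" "N z \<noteq> 0"
    using exists_anisotropic_orthogonal_frame by blast
  define r where "r = M p z"
  have r_orth: "B r v = 0" if "v \<in> frame" for v
    unfolding r_def using polar_mult_orthogonal_frame[OF _ z(1) that] by simp
  have "B r oneO = 0" "B r p = 0"
    using r_orth by (simp_all add: frame_def)
  then have r: "reO r = 0" "B p r = 0"
    using two_neq_zero by (simp_all add: polar_one polar_commute[of p])
  have "M p r = 0"
    by (simp add: r_def left_alternative mult_p_p mult_zero_left)
  moreover have "conjO (M p r) = M r p"
    by (simp add: conj_mult conj_imaginary r(1) p_imaginary mult_neg_left mult_neg_right)
  ultimately have pr: "M p r = 0" "M r p = 0"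
    by (simp_all add: conjO_def zero_prod_def conj2_def conj1_def)
  define q' where "q' = q + r - scaleO (N (q + r) / B p q) p"
  have "B p (q + r) = B p q"
    using r(2) by (simp add: polar_add_right)
  then have "N q' = 0" "B p q' = B p q"
    using polar_p_q
    by (simp_all add: q'_def norm_diff norm_scale p_isotropic polar_diff_right polar_scale_right
        polar_frame polar_commute[of "q + r"])
  moreover have "reO q' = 0"
    by (simp add: q'_def reO_add reO_diff reO_scale q_imaginary r(1) p_imaginary)
  moreover have "comm = M p q' - M q' p"
    by (simp add: q'_def comm_def mult_add_right mult_add_left mult_diff_right mult_diff_left
        mult_scale_right mult_scale_left pr mult_p_p)
  moreover have "V.independent {q', oneO, comm, q, p}" "q' \<notin> {oneO, comm, q, p}"
  proof -
    have qz_orth: "\<forall>s\<in>{oneO, comm, q, p}. B s (M q z) = 0"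
      using polar_mult_orthogonal_frame[of q z] z(1)
    by (auto simp: frame_def polar_commute[of _ "M q z"])
    have "B q' (M q z) = B r (M q z)"
      using qz_orth by (simp add: q'_def polar_add_left polar_diff_left polar_scale_left)
    also have "\<dots> = N z * B p q"
      by (simp add: r_def polar_mult_right)
    finally have "B q' (M q z) \<noteq> 0"
      using z(2) polar_p_q by simp
    then show "V.independent {q', oneO, comm, q, p}" "q' \<notin> {oneO, comm, q, p}"
      using independent_insert_polar[OF independent_frame(1) qz_orth] by blast+
  qed
  ultimately show ?thesis
    using that polar_p_q independent_frame(2) by (simp add: card_insert_if)
qed

lemma typeM_uncovered_or_typeU_covered_twice:
  assumes HH: "\<forall>H\<in>HH. assoc_subalg4 \<alpha> \<beta> \<gamma> H"
  shows "(\<exists>U. typeM \<alpha> \<beta> \<gamma> U \<and> (\<forall>Bl\<in>imH ` HH. \<not> U \<subseteq> Bl)) \<or>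
    (\<exists>U. typeU \<alpha> \<beta> \<gamma> U \<and>
      (\<exists>B1\<in>imH ` HH. \<exists>B2\<in>imH ` HH. B1 \<noteq> B2 \<and> U \<subseteq> B1 \<and> U \<subseteq> B2))"
proof -
  obtain q' where q': "reO q' = 0" "N q' = 0" "B p q' \<noteq> 0" "comm = M p q' - M q' p"
    "V.independent {q', oneO, comm, q, p}" "card {q', oneO, comm, q, p} = 5"
    using exists_second_partner by blast
  have covered: "V.span {p, comm} \<subseteq> imH H"
    if H: "H \<in> HH" and span: "V.span {p, x} \<subseteq> imH H" and x: "comm = M p x - M x p" for H x
  proof -
    have "V.subspace H" "\<forall>x\<in>H. \<forall>y\<in>H. M x y \<in> H"
      using HH H unfolding assoc_subalg4_def by simp_all
    then show ?thesis
      using commutator_plane_subset_imH[OF _ _ span] x by simp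
  qed
  consider "\<forall>H\<in>HH. \<not> V.span {p, q} \<subseteq> imH H" | "\<forall>H\<in>HH. \<not> V.span {p, q'} \<subseteq> imH H"
    | H1 H2 where "H1 \<in> HH" "V.span {p, q} \<subseteq> imH H1" "H2 \<in> HH" "V.span {p, q'} \<subseteq> imH H2"
    by blast
  then show ?thesis
  proof cases
    case 1
    then show ?thesis
      using typeM_span_pair[OF two_neq_zero p_imaginary p_isotropic q_imaginary q_isotropic polar_p_q]
      by blast
  next
    case 2
    then show ?thesis
      using typeM_span_pair[OF two_neq_zero p_imaginary p_isotropic q'(1,2,3)] by blast
  next
    case 3
    have H1: "V.dim H1 = 4" "oneO \<in> H1"
      using HH 3(1) unfolding assoc_subalg4_def by simp_all
    have "imH H1 \<noteq> imH H2"
    proof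
      assume "imH H1 = imH H2"
      then have "{q', comm, q, p} \<subseteq> imH H1"
        using 3(2,4) covered[OF 3(1,2) comm_def] V.span_base by blast
      then have "{q', oneO, comm, q, p} \<subseteq> H1"
        using H1(2) unfolding imH_def by blast
      then have "card {q', oneO, comm, q, p} \<le> 4"
        using card_independent_le_dim[OF q'(5), of H1] H1(1) by simp
      then show False
        using q'(6) by simp
    qed
    moreover have "typeU \<alpha> \<beta> \<gamma> (V.span {p, comm})"
      using typeU_span_pair[OF two_neq_zero p_imaginary p_isotropic p_neq_zero mult_p_p
          comm_imaginary] norm_comm polar_p_comm mult_p_comm polar_p_q
      by (simp add: V.span_scale V.span_base)
    ultimately show ?thesis
      using 3 covered[OF 3(1,2) comm_def] covered[OF 3(3,4) q'(4)] by blast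
  qed
qed

end

theorem mainTheorem13:
  fixes \<alpha> \<beta> \<gamma> :: "'a::field"
    and \<HH> :: "'a cd3 set set"
  assumes char: "(2::'a) \<noteq> 0"
    and nz: "\<alpha> \<noteq> 0" "\<beta> \<noteq> 0" "\<gamma> \<noteq> 0"
    and split: "split_cayley \<alpha> \<beta> \<gamma>"
    and H: "\<forall>H\<in>\<HH>. assoc_subalg4 \<alpha> \<beta> \<gamma> H"
  shows "((\<exists>U. typeM \<alpha> \<beta> \<gamma> U \<and> (\<forall>B\<in>imH ` \<HH>. \<not> U \<subseteq> B)) \<or>
          (\<exists>U. typeU \<alpha> \<beta> \<gamma> U \<and>
             (\<exists>B1\<in>imH ` \<HH>. \<exists>B2\<in>imH ` \<HH>. B1 \<noteq> B2 \<and> U \<subseteq> B1 \<and> U \<subseteq> B2)))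
         \<and> \<not> subspace_design_2_3_1 imO (imH ` \<HH>)"
proof -
  interpret nondegenerate_cayley_algebra \<alpha> \<beta> \<gamma>
    using char nz by unfold_locales
  obtain p where p: "reO p = 0" "N p = 0" "p \<noteq> 0"
    using exists_isotropic_imaginary[OF split] by blast
  obtain q where q: "reO q = 0" "N q = 0" "B p q \<noteq> 0"
    using exists_hyperbolic_partner[OF p] by blast
  interpret hyperbolic_pair \<alpha> \<beta> \<gamma> p q
    by unfold_locales (fact p(1,2) q)+
  have bad_plane: "(\<exists>U. typeM \<alpha> \<beta> \<gamma> U \<and> (\<forall>B\<in>imH ` \<HH>. \<not> U \<subseteq> B)) \<or>
      (\<exists>U. typeU \<alpha> \<beta> \<gamma> U \<and>
        (\<exists>B1\<in>imH ` \<HH>. \<exists>B2\<in>imH ` \<HH>. B1 \<noteq> B2 \<and> U \<subseteq> B1 \<and> U \<subseteq> B2))"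
    using typeM_uncovered_or_typeU_covered_twice[OF H] .
  then show ?thesis
    using not_subspace_design_2_3_1_if_badly_covered[OF bad_plane] by (rule conjI)
qed

end
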